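(* Let $G$ be a group with polynomial growth of degree $k\in\mathbb{Z}_{\ge 0}$, and let $H\le G$ be a subgroup which also has polynomial growth of degree $k$. Then for every $g\in G$ there is a positive integer $n$ such that $g^n\in H$.
   Context: A finitely generated group $G$ with finite generating set $S$ has growth function $\beta(m)=\#\{g\in G : |g|_S\le m\}$, where $|g|_S$ is the word length. $G$ has polynomial growth of degree $k\in\mathbb{Z}_{\ge 0}$ if there are constants $0<\alpha\le\beta'$ with $\alpha m^k\le \beta(m)\le \beta' m^k$ for all $m\ge 1$ (this is independent of the finite generating set). A group with polynomial growth is in particular finitely generated. *)

theory Defs
  imports "HOL-Algebra.Algebra"
begin

definition word_ball :: "('a, 'b) monoid_scheme \<Rightarrow> 'a set \<Rightarrow> nat \<Rightarrow> 'a set" where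
  "word_ball G S m =
     {foldr (\<otimes>\<^bsub>G\<^esub>) xs \<one>\<^bsub>G\<^esub> | xs. length xs \<le> m \<and> set xs \<subseteq> S \<union> (\<lambda>s. inv\<^bsub>G\<^esub> s) ` S}"

definition growth_fun :: "('a, 'b) monoid_scheme \<Rightarrow> 'a set \<Rightarrow> nat \<Rightarrow> nat" where
  "growth_fun G S m = card (word_ball G S m)"

text \<open>Polynomial growth of degree k (w.r.t. some, equivalently any, finite generating set).\<close>
definition poly_growth_deg :: "('a, 'b) monoid_scheme \<Rightarrow> nat \<Rightarrow> bool" where
  "poly_growth_deg G k \<longleftrightarrow>
     (\<exists>S. finite S \<and> S \<subseteq> carrier G \<and> generate G S = carrier G \<and>
        (\<exists>\<alpha> \<beta>::real. 0 < \<alpha> \<and> \<alpha> \<le> \<beta> \<and>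
           (\<forall>m::nat. m \<ge> 1 \<longrightarrow>
               \<alpha> * real m ^ k \<le> real (growth_fun G S m) \<and>
               real (growth_fun G S m) \<le> \<beta> * real m ^ k)))"

end

theory Submission
  imports Defs
begin

text \<open>Suppose no positive power of \<open>g\<close> lies in \<open>H\<close>. Then the cosets \<open>g\<^sup>i H\<close>, \<open>0 \<le> i \<le> m\<close>,
  are pairwise distinct, so the products \<open>g\<^sup>i h\<close> with \<open>i \<le> m\<close> and \<open>h\<close> in the \<open>m\<close>-ball of \<open>H\<close>
  are at least \<open>\<alpha> m\<^sup>k (m + 1)\<close> distinct elements of the \<open>2cm\<close>-ball of \<open>G\<close>, where \<open>c\<close>
  bounds the \<open>G\<close>-length of \<open>g\<close> and of the generators of \<open>H\<close>. That ball has at most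
  \<open>\<beta> (2c)\<^sup>k m\<^sup>k\<close> elements, which is impossible for large \<open>m\<close>.\<close>

lemma finite_word_ball: "finite S \<Longrightarrow> finite (word_ball G S m)"
proof -
  assume "finite S"
  have "word_ball G S m = (\<lambda>xs. foldr (\<otimes>\<^bsub>G\<^esub>) xs \<one>\<^bsub>G\<^esub>) `
      {xs. set xs \<subseteq> S \<union> (\<lambda>s. inv\<^bsub>G\<^esub> s) ` S \<and> length xs \<le> m}"
    unfolding word_ball_def by auto
  then show ?thesis
    by (auto intro!: finite_imageI finite_lists_length_le simp: \<open>finite S\<close>)
qed

context group
begin

lemma foldr_mult_closed: "set xs \<subseteq> carrier G \<Longrightarrow> foldr (\<otimes>) xs \<one> \<in> carrier G"
  by (induction xs) auto

lemma foldr_mult_append: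
  "set xs \<subseteq> carrier G \<Longrightarrow> set ys \<subseteq> carrier G \<Longrightarrow>
    foldr (\<otimes>) (xs @ ys) \<one> = foldr (\<otimes>) xs \<one> \<otimes> foldr (\<otimes>) ys \<one>"
  by (induction xs) (auto simp: m_assoc foldr_mult_closed)

lemma subgroup_foldr_mult_closed: "subgroup H G \<Longrightarrow> set xs \<subseteq> H \<Longrightarrow> foldr (\<otimes>) xs \<one> \<in> H"
  by (induction xs) (auto intro: subgroup.one_closed subgroup.m_closed)

lemma word_ball_mono: "a \<le> b \<Longrightarrow> word_ball G S a \<subseteq> word_ball G S b"
  unfolding word_ball_def by force

lemma one_in_word_ball: "\<one> \<in> word_ball G S m"
  unfolding word_ball_def by (intro CollectI exI[of _ "[]"]) auto

lemma letter_in_word_ball: "S \<subseteq> carrier G \<Longrightarrow> s \<in> S \<union> (\<lambda>s. inv s) ` S \<Longrightarrow> s \<in> word_ball G S 1"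
  unfolding word_ball_def by (intro CollectI exI[of _ "[s]"]) auto

lemma word_ball_mult:
  assumes S: "S \<subseteq> carrier G" and x: "x \<in> word_ball G S a" and y: "y \<in> word_ball G S b"
  shows "x \<otimes> y \<in> word_ball G S (a + b)"
proof -
  obtain xs where xs: "x = foldr (\<otimes>) xs \<one>" "length xs \<le> a" "set xs \<subseteq> S \<union> (\<lambda>s. inv s) ` S"
    using x unfolding word_ball_def by auto
  obtain ys where ys: "y = foldr (\<otimes>) ys \<one>" "length ys \<le> b" "set ys \<subseteq> S \<union> (\<lambda>s. inv s) ` S"
    using y unfolding word_ball_def by auto
  have "set xs \<subseteq> carrier G" "set ys \<subseteq> carrier G"
    using xs(3) ys(3) S by auto
  then have "x \<otimes> y = foldr (\<otimes>) (xs @ ys) \<one>"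
    using xs(1) ys(1) by (metis foldr_mult_append)
  then show ?thesis
    unfolding word_ball_def using xs ys by (intro CollectI exI[of _ "xs @ ys"]) auto
qed

lemma pow_in_word_ball:
  assumes "S \<subseteq> carrier G" and "x \<in> word_ball G S c"
  shows "x [^] n \<in> word_ball G S (c * n)"
proof (induction n)
  case 0
  show ?case using one_in_word_ball by simp
next
  case (Suc n)
  show ?case
    using word_ball_mult[OF assms(1) Suc assms(2)] by (simp add: add.commute)
qed

lemma generate_in_some_word_ball:
  assumes "S \<subseteq> carrier G" and "x \<in> generate G S"
  shows "\<exists>l. x \<in> word_ball G S l"
  using assms(2)
proof (induction rule: generate.induct)
  case one
  show ?case using one_in_word_ball by blast
next
  case (incl h)
  then show ?case using letter_in_word_ball[OF assms(1)] by blast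
next
  case (inv h)
  then show ?case using letter_in_word_ball[OF assms(1)] by blast
next
  case (eng h1 h2)
  then show ?case using word_ball_mult[OF assms(1)] by blast
qed

lemma finite_subset_word_ball:
  assumes "S \<subseteq> carrier G" "generate G S = carrier G" and "finite F" "F \<subseteq> carrier G"
  shows "\<exists>c\<ge>1. F \<subseteq> word_ball G S c"
  using assms(3,4)
proof (induction F rule: finite_induct)
  case empty
  show ?case by auto
next
  case (insert x F)
  then obtain c where c: "c \<ge> 1" "F \<subseteq> word_ball G S c" by auto
  obtain l where l: "x \<in> word_ball G S l"
    using generate_in_some_word_ball assms(1,2) insert.prems by blast
  show ?case
    using c l word_ball_mono[of c "max c l" S] word_ball_mono[of l "max c l" S]
    by (intro exI[of _ "max c l"]) auto
qed

lemma word_ball_subset_word_ball: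
  assumes S: "S \<subseteq> carrier G" and T: "T \<union> (\<lambda>s. inv s) ` T \<subseteq> word_ball G S c"
  shows "word_ball G T m \<subseteq> word_ball G S (c * m)"
proof
  fix x assume "x \<in> word_ball G T m"
  then obtain xs where xs: "x = foldr (\<otimes>) xs \<one>" "length xs \<le> m" "set xs \<subseteq> T \<union> (\<lambda>s. inv s) ` T"
    unfolding word_ball_def by auto
  have "foldr (\<otimes>) xs \<one> \<in> word_ball G S (c * length xs)"
    using xs(3)
  proof (induction xs)
    case Nil
    show ?case using one_in_word_ball by simp
  next
    case (Cons a xs)
    then have "a \<in> word_ball G S c" "foldr (\<otimes>) xs \<one> \<in> word_ball G S (c * length xs)"
      using T by auto
    then show ?case
      using word_ball_mult[OF S] by simp
  qed
  then show "x \<in> word_ball G S (c * m)"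
    using xs(1,2) word_ball_mono[of "c * length xs" "c * m" S] by auto
qed

lemma word_ball_subgroup:
  assumes H: "subgroup H G" and T: "T \<subseteq> H"
  shows "word_ball (G\<lparr>carrier := H\<rparr>) T m = word_ball G T m"
proof -
  have "(\<lambda>s. inv\<^bsub>G\<lparr>carrier := H\<rparr>\<^esub> s) ` T = (\<lambda>s. inv s) ` T"
    using m_inv_consistent[OF H] T by (intro image_cong) auto
  then show ?thesis unfolding word_ball_def by simp
qed

lemma word_ball_subset_subgroup:
  assumes "subgroup H G" and "T \<subseteq> H"
  shows "word_ball G T m \<subseteq> H"
proof
  fix x assume "x \<in> word_ball G T m"
  then obtain xs where xs: "x = foldr (\<otimes>) xs \<one>" "set xs \<subseteq> T \<union> (\<lambda>s. inv s) ` T"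
    unfolding word_ball_def by auto
  have "T \<union> (\<lambda>s. inv s) ` T \<subseteq> H"
    using assms(2) subgroup.m_inv_closed[OF assms(1)] by auto
  then show "x \<in> H"
    unfolding xs(1) using xs(2) by (intro subgroup_foldr_mult_closed[OF assms(1)]) auto
qed

lemma pow_mult_inj_on:
  assumes H: "subgroup H G" and g: "g \<in> carrier G" and no_pow: "\<forall>n::nat>0. g [^] n \<notin> H"
  shows "inj_on (\<lambda>(i::nat, h). g [^] i \<otimes> h) (UNIV \<times> H)"
proof -
  have HG: "H \<subseteq> carrier G"
    using H subgroup.subset by blast
  have same_exp: "i = j"
    if "i \<le> j" "g [^] i \<otimes> h = g [^] j \<otimes> h'" "h \<in> H" "h' \<in> H" for i j :: nat and h h'
  proof -
    have hG: "h \<in> carrier G" "h' \<in> carrier G"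
      using that(3,4) HG by auto
    have "g [^] j = g [^] i \<otimes> g [^] (j - i)"
      using nat_pow_mult[OF g, of i "j - i"] that(1) by simp
    then have "g [^] i \<otimes> h = g [^] i \<otimes> (g [^] (j - i) \<otimes> h')"
      using that(2) g hG by (simp add: m_assoc)
    then have "h = g [^] (j - i) \<otimes> h'"
      using l_cancel[of "g [^] i" h "g [^] (j - i) \<otimes> h'"] g hG by blast
    then have "g [^] (j - i) = h \<otimes> inv h'"
      using g hG by (simp add: m_assoc)
    also have "\<dots> \<in> H"
      using that(3,4) H by (simp add: subgroup.m_closed subgroup.m_inv_closed)
    finally have "\<not> j - i > 0"
      using no_pow by auto
    then show "i = j"
      using that(1) by simp
  qed
  show ?thesis
  proof (rule inj_onI, clarify)
    fix i j :: nat and h h'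
    assume h: "h \<in> H" "h' \<in> H" and eq: "g [^] i \<otimes> h = g [^] j \<otimes> h'"
    have "i = j"
    proof (cases "i \<le> j")
      case True
      then show ?thesis using same_exp eq h by blast
    next
      case False
      then show ?thesis using same_exp[of j i h' h] eq h by simp
    qed
    moreover have "h = h'"
      using eq g h HG by (simp add: \<open>i = j\<close> l_cancel subset_iff)
    ultimately show "i = j \<and> h = h'" by simp
  qed
qed

lemma Suc_mult_growth_fun_subgroup_le:
  assumes S: "finite S" "S \<subseteq> carrier G" and H: "subgroup H G"
    and T: "T \<subseteq> H" "T \<union> (\<lambda>s. inv s) ` T \<subseteq> word_ball G S c"
    and g: "g \<in> carrier G" "g \<in> word_ball G S c" and no_pow: "\<forall>n::nat>0. g [^] n \<notin> H"
  shows "Suc m * growth_fun (G\<lparr>carrier := H\<rparr>) T m \<le> growth_fun G S (2 * c * m)"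
proof -
  let ?B = "word_ball G T m"
  let ?f = "\<lambda>(i::nat, h). g [^] i \<otimes> h"
  have B: "?B \<subseteq> word_ball G S (c * m) \<inter> H"
    using word_ball_subset_word_ball[OF S(2) T(2)] word_ball_subset_subgroup[OF H T(1)] by blast
  have "?f ` ({0..m} \<times> ?B) \<subseteq> word_ball G S (c * m + c * m)"
  proof clarify
    fix i h assume i: "i \<in> {0..m}" and h: "h \<in> ?B"
    have "g [^] i \<in> word_ball G S (c * m)"
      using pow_in_word_ball[OF S(2) g(2), of i] word_ball_mono[of "c * i" "c * m" S] i
      by auto
    then show "g [^] i \<otimes> h \<in> word_ball G S (c * m + c * m)"
      using word_ball_mult[OF S(2)] h B by blast
  qed
  then have "card (?f ` ({0..m} \<times> ?B)) \<le> growth_fun G S (2 * c * m)"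
    unfolding growth_fun_def
    by (intro card_mono) (auto simp: finite_word_ball S(1) mult_2 add_mult_distrib)
  moreover have "inj_on ?f ({0..m} \<times> ?B)"
    by (rule inj_on_subset[OF pow_mult_inj_on[OF H g(1) no_pow]]) (use B in auto)
  ultimately show ?thesis
    by (simp add: growth_fun_def word_ball_subgroup[OF H T(1)] card_image card_cartesian_product)
qed

end

lemma ex_poly_less_poly_times_Suc:
  fixes \<alpha> C :: real
  assumes "0 < \<alpha>"
  shows "\<exists>m::nat. m \<ge> 1 \<and> C * real m ^ k < \<alpha> * real m ^ k * real (Suc m)"
proof -
  define m where "m = nat \<lceil>C / \<alpha>\<rceil> + 1"
  have "C / \<alpha> < real m"
    unfolding m_def by linarith
  then have "C < \<alpha> * real (Suc m)"
    using assms by (simp add: divide_less_eq algebra_simps)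
  moreover have "real m ^ k > 0"
    unfolding m_def by simp
  ultimately show ?thesis
    by (intro exI[of _ m]) (auto simp: m_def mult.commute mult.left_commute)
qed

theorem lemma1:
  fixes G :: "('a, 'b) monoid_scheme" and H :: "'a set" and k :: nat
  assumes "group G"
    and "poly_growth_deg G k"
    and "subgroup H G"
    and "poly_growth_deg (G\<lparr>carrier := H\<rparr>) k"
  shows "\<forall>g \<in> carrier G. \<exists>n::nat. n > 0 \<and> g [^]\<^bsub>G\<^esub> n \<in> H"
proof (intro ballI, rule ccontr)
  fix g assume g: "g \<in> carrier G" and "\<not> (\<exists>n::nat. n > 0 \<and> g [^]\<^bsub>G\<^esub> n \<in> H)"
  then have no_pow: "\<forall>n::nat>0. g [^]\<^bsub>G\<^esub> n \<notin> H" by blast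
  interpret group G by fact
  obtain S \<beta> where S: "finite S" "S \<subseteq> carrier G" "generate G S = carrier G"
    and upper: "\<And>m::nat. m \<ge> 1 \<Longrightarrow> real (growth_fun G S m) \<le> \<beta> * real m ^ k"
    using assms(2) unfolding poly_growth_deg_def by blast
  obtain T \<alpha> where T: "finite T" "T \<subseteq> H" and "0 < \<alpha>"
    and lower: "\<And>m::nat. m \<ge> 1 \<Longrightarrow> \<alpha> * real m ^ k \<le> real (growth_fun (G\<lparr>carrier := H\<rparr>) T m)"
    using assms(4) unfolding poly_growth_deg_def by auto
  let ?F = "insert g (T \<union> (\<lambda>s. inv\<^bsub>G\<^esub> s) ` T)"
  have "finite ?F" "?F \<subseteq> carrier G"
    using T g subgroup.subset[OF assms(3)] by auto
  then obtain c where "c \<ge> 1" and c: "?F \<subseteq> word_ball G S c"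
    using finite_subset_word_ball[OF S(2,3)] by blast
  obtain m :: nat where m: "m \<ge> 1"
    "\<beta> * (2 * real c) ^ k * real m ^ k < \<alpha> * real m ^ k * real (Suc m)"
    using ex_poly_less_poly_times_Suc[OF \<open>0 < \<alpha>\<close>] by blast
  have "Suc m * growth_fun (G\<lparr>carrier := H\<rparr>) T m \<le> growth_fun G S (2 * c * m)"
    using c no_pow by (intro Suc_mult_growth_fun_subgroup_le[OF S(1,2) assms(3) T(2) _ g]) auto
  have "\<alpha> * real m ^ k * real (Suc m)
      \<le> real (growth_fun (G\<lparr>carrier := H\<rparr>) T m) * real (Suc m)"
    using lower[OF m(1)] by (intro mult_right_mono) auto
  also have "\<dots> \<le> real (growth_fun G S (2 * c * m))"
    using \<open>Suc m * _ \<le> _\<close> by (metis mult.commute of_nat_le_iff of_nat_mult)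
  also have "\<dots> \<le> \<beta> * real (2 * c * m) ^ k"
    using upper[of "2 * c * m"] \<open>c \<ge> 1\<close> m(1) by (simp add: Suc_le_eq)
  also have "\<dots> = \<beta> * (2 * real c) ^ k * real m ^ k"
    by (simp add: power_mult_distrib)
  finally show False
    using m(2) by simp
qed

end
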